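(* Let $M,K$ be positive integers and let $R_1,\dots,R_n$ be positive integers with $R_i<2^K$. Let $s_i\in\{0,1,\dots,R_i-1\}$ for $i=1,\dots,n$. Starting from state $c_0=2^M$ and empty bit-stream $\mathtt{bs}_0$, encode $s_1,\dots,s_n$ in order with the UBCS encoder, where $s_i$ is encoded using $U(0,R_i)$, and let $c_i,\mathtt{bs}_i$ denote the state and bit-stream after encoding $s_i$. Then, starting from $(c_n,\mathtt{bs}_n)$, decode sequentially with the UBCS decoder using $U(0,R_n),U(0,R_{n-1}),\dots,U(0,R_1)$, obtaining symbols $s'_n,s'_{n-1},\dots,s'_1$, and let $c'_i,\mathtt{bs}'_i$ denote the state and bit-stream after decoding $s'_{i+1}$. Then: (P1) $s'_{i+1}=s_{i+1}$, $c'_i=c_i$ and $\mathtt{bs}'_i=\mathtt{bs}_i$ for all $i=0,\dots,n-1$. (P2) Letting $l_i=\lceil\log c_i\rceil+\mathtt{len}(\mathtt{bs}_i)$, where $\mathtt{len}$ is the total number of bits in the bit-stream, $$l_n-l_0<\frac{1}{1-1/(\ln 2\cdot 2^M\cdot K)}\Big[\sum_{i=1}^n\log R_i+1+(\ln 2\cdot 2^M)^{-1}\Big].$$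
   Context: All logarithms $\log$ are base 2. The Uniform Base Conversion System (UBCS) has an integer state $c$ and a bit-stream $\mathtt{bs}$, which is a stack of $K$-bit chunks. ENCODE a symbol $s\in\{0,\dots,R-1\}$ using $U(0,R)$ (with $R<2^K$): set $c\gets c\cdot R+s$; if $c\ge 2^{M+K}$, push the $K$-bit value $c\bmod 2^K$ onto the end of $\mathtt{bs}$ and set $c\gets\lfloor c/2^K\rfloor$; return $(c,\mathtt{bs})$. DECODE using $U(0,R)$ (with $R<2^K$): if $c<2^M\cdot R$, pop the last $K$-bit value $r$ from $\mathtt{bs}$ and set $c\gets 2^K\cdot c+r$; then set $s\gets c\bmod R$ and $c\gets\lfloor c/R\rfloor$; return $(s,c,\mathtt{bs})$. *)

theory Defs
  imports Complex_Main
begin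

text \<open>UBCS state: integer state c and a bit-stream given as a stack (list) of K-bit chunks;
  pushing/popping happens at the end of the list.\<close>

definition ubcs_encode :: "nat \<Rightarrow> nat \<Rightarrow> nat \<Rightarrow> nat \<Rightarrow> nat \<times> nat list \<Rightarrow> nat \<times> nat list" where
  "ubcs_encode M K R s st =
     (let c = fst st * R + s; bs = snd st in
      if c \<ge> 2 ^ (M + K) then (c div 2 ^ K, bs @ [c mod 2 ^ K]) else (c, bs))"

definition ubcs_decode :: "nat \<Rightarrow> nat \<Rightarrow> nat \<Rightarrow> nat \<times> nat list \<Rightarrow> nat \<times> nat \<times> nat list" where
  "ubcs_decode M K R st =
     (let (c, bs) = (if fst st < 2 ^ M * R
                     then (2 ^ K * fst st + last (snd st), butlast (snd st))
                     else st)
      in (c mod R, c div R, bs))"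

definition bs_len :: "nat \<Rightarrow> nat list \<Rightarrow> nat" where
  "bs_len K bs = K * length bs"

end

(*
  The encoder keeps its state in [2^M, 2^(M+K)): when c R + s reaches 2^(M+K), dropping its
  low K bits leaves at least 2^M, and c R + s < 2^(M+K) R < 2^(M+K) 2^K because R < 2^K.
  Under this invariant the decoder's test c < 2^M R detects exactly whether a chunk was
  pushed, so each decoding step undoes the matching encoding step.

  For the length, the potential  log c + K |bs| - |bs| / (ln 2 2^M) + 1 / (ln 2 c)  grows by
  at most log R per symbol: by ln x <= x - 1 the rounding loss log (c R + s) - log c - log R
  is at most 1 / (ln 2 c) - 1 / (ln 2 (c R + s)), and a flush raises the last term by at most
  1 / (ln 2 2^M), which the credit -1 / (ln 2 2^M) of the new chunk pays for. The potential
  differs from the ideal length log c + K |bs| by the factor 1 - 1 / (ln 2 2^M K) on the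
  chunks, which gives the bound after rounding log c up.
*)
theory Submission
  imports Defs "HOL-Analysis.Harmonic_Numbers"
begin

lemma ubcs_encode_range:
  fixes M K R s c :: nat
  assumes c: "c \<in> {2^M..<2^(M+K)}" and R: "0 < R" "R < 2^K" and s: "s < R"
  shows "fst (ubcs_encode M K R s (c, bs)) \<in> {2^M..<2^(M+K)}"
proof -
  define x where "x = c * R + s"
  have "x < (c + 1) * R" using s by (simp add: x_def)
  also have "\<dots> \<le> 2^(M+K) * R" using c by (intro mult_right_mono) auto
  also have "\<dots> < 2^(M+K) * 2^K" using R by simp
  finally have x_less: "x < 2^(M+K) * 2^K" .
  have "c \<le> x" using R by (simp add: x_def trans_le_add1)
  then show ?thesis
    using c x_less
    by (auto simp: ubcs_encode_def Let_def x_def[symmetric] less_eq_div_iff_mult_less_eq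
        power_add less_mult_imp_div_less)
qed

lemma ubcs_decode_encode:
  fixes M K R s c :: nat
  assumes c: "c \<in> {2^M..<2^(M+K)}" and R: "0 < R" "R < 2^K" and s: "s < R"
  shows "ubcs_decode M K R (ubcs_encode M K R s (c, bs)) = (s, c, bs)"
proof -
  define x where "x = c * R + s"
  have x_mod_div: "x mod R = s" "x div R = c" using s by (simp_all add: x_def)
  have "x < (c + 1) * R" using s by (simp add: x_def)
  also have "\<dots> \<le> 2^(M+K) * R" using c by (intro mult_right_mono) auto
  finally have "x div 2^K < 2^M * R" by (simp add: less_mult_imp_div_less power_add mult_ac)
  moreover have "2^M * R \<le> x" using c by (simp add: x_def trans_le_add1)
  ultimately show ?thesis
    using x_mod_div
    by (auto simp: ubcs_encode_def ubcs_decode_def Let_def x_def[symmetric])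
qed

lemma log2_mult_add_le:
  fixes c R s :: real
  assumes c: "0 < c" and s: "0 \<le> s" "s \<le> R - 1"
  shows "log 2 (c * R + s) \<le> log 2 c + log 2 R + 1 / (ln 2 * c) - 1 / (ln 2 * (c * R + s))"
proof -
  define x where "x = c * R + s"
  have R: "0 < R" using s by linarith
  have x: "0 < x" using c R s by (simp add: x_def add_pos_nonneg)
  have "log 2 x - log 2 c - log 2 R = ln (x / (c * R)) / ln 2"
    using c R x by (simp add: log_def ln_div ln_mult diff_divide_distrib add_divide_distrib)
  also have "\<dots> \<le> (x / (c * R) - 1) / ln 2"
    using c R x by (intro divide_right_mono ln_le_minus_one) auto
  also have "x / (c * R) - 1 = s / (c * R)"
    using c R by (simp add: x_def field_simps)
  also have "s / (c * R) \<le> 1 / c - 1 / x"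
  proof -
    have "0 \<le> c * R * (R - 1 - s) + s * (R - s)"
      using c R s by (intro add_nonneg_nonneg mult_nonneg_nonneg) auto
    then have "s * x \<le> R * (x - c)" by (simp add: x_def algebra_simps)
    then show ?thesis using c R x by (simp add: field_simps)
  qed
  finally have "log 2 x - log 2 c - log 2 R \<le> (1 / c - 1 / x) / ln 2"
    by (simp add: divide_right_mono)
  also have "\<dots> = 1 / (ln 2 * c) - 1 / (ln 2 * x)"
    by (simp add: diff_divide_distrib mult.commute)
  finally show ?thesis unfolding x_def by linarith
qed

definition ubcs_potential :: "nat \<Rightarrow> nat \<Rightarrow> nat \<Rightarrow> nat list \<Rightarrow> real" where
  "ubcs_potential M K c bs =
     log 2 c + K * length bs - length bs / (ln 2 * 2^M) + 1 / (ln 2 * c)"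

lemma ubcs_potential_encode_le:
  fixes M K R s c :: nat
  assumes c: "c \<in> {2^M..<2^(M+K)}" and R: "0 < R" "R < 2^K" and s: "s < R"
    and enc: "ubcs_encode M K R s (c, bs) = (c1, bs1)"
  shows "ubcs_potential M K c1 bs1 \<le> ubcs_potential M K c bs + log 2 R"
proof -
  define x where "x = c * R + s"
  have c_pos: "0 < c" using c by (auto intro: order_less_le_trans[of 0 "2^M"])
  have "real s \<le> real R - 1" using s by linarith
  then have log_x: "log 2 x \<le> log 2 c + log 2 R + 1 / (ln 2 * c) - 1 / (ln 2 * x)"
    using log2_mult_add_le[of c s R] c_pos by (simp add: x_def)
  have x_pos: "0 < x" using c_pos R by (simp add: x_def)
  have c1: "2^M \<le> c1" using ubcs_encode_range[OF assms(1-4), of bs] enc by simp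
  then have c1_pos: "0 < c1" by (auto intro: order_less_le_trans[of 0 "2^M"])
  show ?thesis
  proof (cases "2^(M+K) \<le> x")
    case True
    then have c1_eq: "c1 = x div 2^K" and bs1: "length bs1 = Suc (length bs)"
      using enc by (auto simp: ubcs_encode_def Let_def x_def[symmetric])
    have "c1 * 2^K \<le> x" unfolding c1_eq by (rule div_times_less_eq_dividend)
    then have "real c1 * 2^K \<le> real x" using of_nat_mono by fastforce
    then have "log 2 (real c1 * 2^K) \<le> log 2 x" using c1_pos x_pos by (subst log_le_cancel_iff) auto
    then have log_c1: "log 2 c1 + K \<le> log 2 x" using c1_pos by (simp add: log_mult)
    have "1 / (ln 2 * c1) \<le> 1 / (ln 2 * 2^M)"
      using c1 c1_pos by (intro divide_left_mono mult_left_mono mult_pos_pos) auto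
    moreover have "log 2 x \<le> log 2 c + log 2 R + 1 / (ln 2 * c)"
      using log_x by (simp add: diff_le_eq order_trans)
    ultimately show ?thesis
      using log_c1 unfolding ubcs_potential_def bs1 of_nat_Suc add_divide_distrib
      by (simp add: algebra_simps)
  next
    case False
    then have "c1 = x" "bs1 = bs"
      using enc by (auto simp: ubcs_encode_def Let_def x_def[symmetric])
    then show ?thesis using log_x by (simp add: ubcs_potential_def)
  qed
qed

locale ubcs_encoding =
  fixes M K n :: nat and R s c :: "nat \<Rightarrow> nat" and bs :: "nat \<Rightarrow> nat list"
  assumes K_pos: "K > 0"
    and R_pos: "\<And>i. 1 \<le> i \<Longrightarrow> i \<le> n \<Longrightarrow> R i > 0"
    and R_lt: "\<And>i. 1 \<le> i \<Longrightarrow> i \<le> n \<Longrightarrow> R i < 2 ^ K"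
    and s_lt: "\<And>i. 1 \<le> i \<Longrightarrow> i \<le> n \<Longrightarrow> s i < R i"
    and enc0: "c 0 = 2 ^ M" "bs 0 = []"
    and enc_step: "\<And>i. i < n \<Longrightarrow>
        (c (Suc i), bs (Suc i)) = ubcs_encode M K (R (Suc i)) (s (Suc i)) (c i, bs i)"
begin

lemma symbol_bounds:
  assumes "i < n"
  shows "0 < R (Suc i)" "R (Suc i) < 2^K" "s (Suc i) < R (Suc i)"
  using R_pos R_lt s_lt assms by auto

lemma state_range: "i \<le> n \<Longrightarrow> c i \<in> {2^M..<2^(M+K)}"
proof (induction i)
  case 0
  have "(2::nat)^M < 2^(M+K)" using K_pos by (intro power_strict_increasing) auto
  then show ?case using enc0 by simp
next
  case (Suc i)
  then have "c (Suc i) = fst (ubcs_encode M K (R (Suc i)) (s (Suc i)) (c i, bs i))"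
    using enc_step by (metis Suc_le_lessD fst_conv)
  then show ?case using ubcs_encode_range symbol_bounds Suc by simp
qed

lemma decode_inverts_encode:
  fixes s' c' :: "nat \<Rightarrow> nat" and bs' :: "nat \<Rightarrow> nat list"
  assumes dec0: "c' n = c n" "bs' n = bs n"
    and dec_step: "\<And>i. i < n \<Longrightarrow>
        (s' (Suc i), c' i, bs' i) = ubcs_decode M K (R (Suc i)) (c' (Suc i), bs' (Suc i))"
    and "i < n"
  shows "s' (Suc i) = s (Suc i) \<and> c' i = c i \<and> bs' i = bs i"
proof -
  have decode_step: "(s' (Suc k), c' k, bs' k) = (s (Suc k), c k, bs k)"
    if "k < n" "c' (Suc k) = c (Suc k)" "bs' (Suc k) = bs (Suc k)" for k
    using dec_step[OF \<open>k < n\<close>] enc_step[OF \<open>k < n\<close>] that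
      ubcs_decode_encode[OF state_range symbol_bounds[OF \<open>k < n\<close>]] by simp
  have states_agree: "c' k = c k \<and> bs' k = bs k" if "k \<le> n" for k
    using that
  proof (induction rule: inc_induct)
    case base
    show ?case using dec0 by simp
  next
    case (step k)
    then show ?case using decode_step by simp
  qed
  show ?thesis using decode_step[OF \<open>i < n\<close>] states_agree[of "Suc i"] \<open>i < n\<close> by simp
qed

lemma potential_le_sum_log:
  "i \<le> n \<Longrightarrow>
    ubcs_potential M K (c i) (bs i) \<le> M + 1 / (ln 2 * 2^M) + (\<Sum>j=1..i. log 2 (R j))"
proof (induction i)
  case 0
  then show ?case using enc0 by (simp add: ubcs_potential_def)
next
  case (Suc i)
  then have "i < n" by simp
  have "ubcs_potential M K (c (Suc i)) (bs (Suc i)) \<le>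
      ubcs_potential M K (c i) (bs i) + log 2 (R (Suc i))"
    using ubcs_potential_encode_le[OF state_range symbol_bounds[OF \<open>i < n\<close>]]
      enc_step[OF \<open>i < n\<close>] \<open>i < n\<close> by simp
  then show ?case using Suc by simp
qed

lemma ideal_length_bound:
  "(1 - 1 / (ln 2 * 2^M * K)) * (log 2 (c n) + K * length (bs n) - M)
     \<le> (\<Sum>j=1..n. log 2 (R j)) + 1 / (ln 2 * 2^M)"
proof -
  define \<epsilon> :: real where "\<epsilon> = 1 / (ln 2 * 2^M * K)"
  have "2^M \<le> real (c n)" using state_range[of n] by (simp flip: of_nat_le_iff)
  then have "log 2 (2^M) \<le> log 2 (c n)" by (intro log_mono) auto
  moreover have "0 \<le> \<epsilon>" by (simp add: \<epsilon>_def)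
  ultimately have "(1 - \<epsilon>) * (log 2 (c n) - M) \<le> log 2 (c n) - M"
    by (simp add: algebra_simps mult_left_mono)
  moreover have "(1 - \<epsilon>) * (K * length (bs n)) = K * length (bs n) - length (bs n) / (ln 2 * 2^M)"
    using K_pos by (simp add: \<epsilon>_def field_simps)
  moreover have "0 \<le> 1 / (ln 2 * c n)" by simp
  moreover have "(1 - \<epsilon>) * (log 2 (c n) + K * length (bs n) - M) =
      (1 - \<epsilon>) * (log 2 (c n) - M) + (1 - \<epsilon>) * (K * length (bs n))"
    by (simp add: algebra_simps)
  ultimately have "(1 - \<epsilon>) * (log 2 (c n) + K * length (bs n) - M)
      \<le> ubcs_potential M K (c n) (bs n) - M"
    unfolding ubcs_potential_def by linarith
  then show ?thesis using potential_le_sum_log[of n] by (simp add: \<epsilon>_def)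
qed

end

theorem theorem1:
  fixes M K n :: nat
    and R s :: "nat \<Rightarrow> nat"
    and c :: "nat \<Rightarrow> nat" and bs :: "nat \<Rightarrow> nat list"
    and s' :: "nat \<Rightarrow> nat" and c' :: "nat \<Rightarrow> nat" and bs' :: "nat \<Rightarrow> nat list"
  assumes M_pos: "M > 0" and K_pos: "K > 0"
    and R_pos: "\<And>i. 1 \<le> i \<Longrightarrow> i \<le> n \<Longrightarrow> R i > 0"
    and R_lt: "\<And>i. 1 \<le> i \<Longrightarrow> i \<le> n \<Longrightarrow> R i < 2 ^ K"
    and s_lt: "\<And>i. 1 \<le> i \<Longrightarrow> i \<le> n \<Longrightarrow> s i < R i"
    and enc0: "c 0 = 2 ^ M" "bs 0 = []"
    and enc_step: "\<And>i. i < n \<Longrightarrow>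
        (c (Suc i), bs (Suc i)) = ubcs_encode M K (R (Suc i)) (s (Suc i)) (c i, bs i)"
    and dec0: "c' n = c n" "bs' n = bs n"
    and dec_step: "\<And>i. i < n \<Longrightarrow>
        (s' (Suc i), c' i, bs' i) = ubcs_decode M K (R (Suc i)) (c' (Suc i), bs' (Suc i))"
  shows "(\<forall>i<n. s' (Suc i) = s (Suc i) \<and> c' i = c i \<and> bs' i = bs i) \<and>
    (let l = (\<lambda>i. real_of_int \<lceil>log 2 (real (c i))\<rceil> + real (bs_len K (bs i))) in
      l n - l 0 < 1 / (1 - 1 / (ln 2 * 2 ^ M * real K)) *
        ((\<Sum>i=1..n. log 2 (real (R i))) + 1 + 1 / (ln 2 * 2 ^ M)))"
proof -
  interpret ubcs_encoding M K n R s c bs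
    using K_pos R_pos R_lt s_lt enc0 enc_step by unfold_locales auto
  define \<epsilon> :: real where "\<epsilon> = 1 / (ln 2 * 2 ^ M * real K)"
  define S where "S = (\<Sum>i=1..n. log 2 (real (R i)))"
  define L where "L = log 2 (c n) + K * length (bs n)"
  define l where "l = (\<lambda>i. real_of_int \<lceil>log 2 (real (c i))\<rceil> + real (bs_len K (bs i)))"
  have "2 / 3 * 2 * 1 \<le> ln 2 * 2 ^ M * real K"
    using ln2_ge_two_thirds M_pos K_pos
    by (intro mult_mono) (auto simp: Suc_le_eq self_le_power)
  then have \<epsilon>: "0 < 1 - \<epsilon>" "1 - \<epsilon> \<le> 1" by (auto simp: \<epsilon>_def)
  have "L - M \<le> (S + 1 / (ln 2 * 2 ^ M)) / (1 - \<epsilon>)"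
    using ideal_length_bound \<epsilon> by (simp add: L_def S_def \<epsilon>_def pos_le_divide_eq mult.commute)
  moreover have "l n < L + 1" "l 0 = M" by (simp_all add: l_def L_def bs_len_def enc0) linarith
  moreover have "1 \<le> 1 / (1 - \<epsilon>)" using \<epsilon> by simp
  ultimately have "l n - l 0 < 1 / (1 - \<epsilon>) * (S + 1 + 1 / (ln 2 * 2 ^ M))"
    by (simp add: add_divide_distrib)
  then show ?thesis
    using decode_inverts_encode[OF dec0 dec_step]
    unfolding Let_def l_def[symmetric] \<epsilon>_def[symmetric] S_def[symmetric] by blast
qed

end
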